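(* In the screening cohort model described in the context, for a screening policy $h\in\{S,NS\}^J$, the expected total number of life years left $T_h$ of the cohort, measured at the beginning, is $$ \mathbb{E} T_h = \sum_{j=2}^J 2N_j + \sum_{j=1}^J \left[\lambda_{j,-1}(1)\,\mu_{j,h}(-1) + \sum_{k=0}^K \mu_{j,h}(k)\,\mathbb{E} T_{j,k}\right]N_j, $$ where $\mathbb{E} T_{j,k} = \sum_{t=0}^\infty t\,\lambda_{j,k}(t)$.
   Context: Model of a cohort of women undergoing (biennial) breast cancer screening. Age groups (screening rounds, two years apart) are indexed by $j=1,\dots,J$. A policy is $h=[h(1),\dots,h(J)]\in\{S,NS\}^J$, where $h(j)=S$ means age group $j$ is screened and $NS$ means not screened. At round $j$, an individual's observed state is a random variable $X_{j,h}\in\{-1,0,1,\dots,K\}$, where $-1$ means no breast cancer diagnosed and $k=0,\dots,K$ are diagnosed cancer stages; its distribution $\mu_{j,h}(k)=P(X_{j,h}=k)$ depends only on $j$ and $h(j)$ (not on the individual). For an individual of age group $j$ in state $k$, the time to death (in years, a nonnegative integer) is $T_{j,k}$ with distribution $\lambda_{j,k}(t)=P(T_{j,k}=t)$, independent of the individual. $T_j$ denotes the time to death of an individual at age group $j$ regardless of state, with $P(T_j=t)=\sum_{k=-1}^K \lambda_{j,k}(t)\mu_{j,h}(k)$. Individuals leave the screening population when they die or are diagnosed with breast cancer. The cohort starts with $N_1=N_0$ individuals, and the number invited at round $j+1$ is $N_{j+1}=N_j\big(1-P(T_j\in\{0,1\})-P(T_j\ge 2, X_{j,h}\ne -1)\big)$.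 Life-year accounting: each individual present at round $j\ge 2$ contributes the two years lived between rounds $j-1$ and $j$; at round $j$, an undiagnosed individual (state $-1$) who lives only one more year contributes one year; an individual diagnosed at round $j$ in stage $k\ge 0$ contributes $T_{j,k}$ further years. $T_h$ denotes the total number of life years of the cohort counted in this way under policy $h$. *)

theory Defs
  imports "HOL-Probability.Probability"
begin

datatype scr = S | NS

type_synonym policy = "nat \<Rightarrow> scr"

text \<open>State distribution mu j a: distribution of X_{j,h} when h(j) = a (states are integers -1..K).
  Time-to-death distribution lam j k: distribution of T_{j,k}.\<close>
definition joint_pmf ::
  "(nat \<Rightarrow> scr \<Rightarrow> int pmf) \<Rightarrow> (nat \<Rightarrow> int \<Rightarrow> nat pmf) \<Rightarrow> policy \<Rightarrow> nat \<Rightarrow> (int \<times> nat) pmf" where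
  "joint_pmf mu lam h j =
     bind_pmf (mu j (h j)) (\<lambda>k. map_pmf (\<lambda>t. (k, t)) (lam j k))"

text \<open>Number of individuals invited at round j (j \<ge> 1); index 0 is unused.\<close>
fun cohort ::
  "real \<Rightarrow> (nat \<Rightarrow> scr \<Rightarrow> int pmf) \<Rightarrow> (nat \<Rightarrow> int \<Rightarrow> nat pmf) \<Rightarrow> policy \<Rightarrow> nat \<Rightarrow> real" where
  "cohort N0 mu lam h 0 = N0"
| "cohort N0 mu lam h (Suc 0) = N0"
| "cohort N0 mu lam h (Suc (Suc j)) =
     cohort N0 mu lam h (Suc j) *
       (1 - measure_pmf.prob (joint_pmf mu lam h (Suc j)) {(k, t). t \<in> {0, 1}}
          - measure_pmf.prob (joint_pmf mu lam h (Suc j)) {(k, t). t \<ge> 2 \<and> k \<noteq> -1})"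

text \<open>Life years contributed (from round j on, until the next round) by one individual present
  at round j, whose state is k and time to death is t.\<close>
definition contrib :: "nat \<Rightarrow> int \<times> nat \<Rightarrow> real" where
  "contrib j kt =
     (if j \<ge> 2 then 2 else 0)
     + (if fst kt = -1 \<and> snd kt = 1 then 1 else 0)
     + (if fst kt \<ge> 0 then real (snd kt) else 0)"

text \<open>Expected total life years E T_h of the cohort: each of the N_j individuals at round j
  contributes contrib j (X_{j,h}, T_j) (linearity of expectation over individuals).\<close>
definition expected_life_years ::
  "nat \<Rightarrow> real \<Rightarrow> (nat \<Rightarrow> scr \<Rightarrow> int pmf) \<Rightarrow> (nat \<Rightarrow> int \<Rightarrow> nat pmf) \<Rightarrow> policy \<Rightarrow> real" where
  "expected_life_years J N0 mu lam h =
     (\<Sum>j = 1..J. cohort N0 mu lam h j *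
        measure_pmf.expectation (joint_pmf mu lam h j) (contrib j))"

end

theory Submission
  imports Defs
begin

text \<open>Given its state k at round j, an individual contributes
  2 [j \<ge> 2] + [k = -1 \<and> T = 1] + [k \<ge> 0] T life years, whose conditional expectation is
  2 [j \<ge> 2] + [k = -1] P(T(j,-1) = 1) + [k \<ge> 0] E T(j,k). There are only finitely many
  states, so averaging over the state distribution is a finite sum, in which the constant
  term averages to 2 [j \<ge> 2]. The only analytic input is that the unbounded term T is
  integrable precisely when its mean series converges.\<close>

lemma integrable_real_pmf_nat:
  assumes "summable (\<lambda>t. real t * pmf p t)"
  shows "integrable (measure_pmf p) real"
  unfolding measure_pmf_eq_density using assms
  by (subst integrable_density) (auto simp: integrable_count_space_nat_iff mult_ac)

lemma expectation_real_pmf_nat: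
  assumes "summable (\<lambda>t. real t * pmf p t)"
  shows "measure_pmf.expectation p real = (\<Sum>t. real t * pmf p t)"
proof -
  have "measure_pmf.expectation p real = (\<integral>t. pmf p t * real t \<partial>count_space UNIV)"
    unfolding measure_pmf_eq_density by (subst integral_density) auto
  also have "\<dots> = (\<Sum>t. real t * pmf p t)"
    using assms by (subst integral_count_space_nat) (auto simp: integrable_count_space_nat_iff mult_ac)
  finally show ?thesis .
qed

lemma expectation_bind_pmf_finite_support:
  fixes f :: "'b \<Rightarrow> real"
  assumes "finite A" "set_pmf p \<subseteq> A"
    and nonneg: "\<And>y. 0 \<le> f y"
    and "\<And>x. x \<in> A \<Longrightarrow> integrable (measure_pmf (q x)) f"
  shows "measure_pmf.expectation (bind_pmf p q) f =
           (\<Sum>x\<in>A. pmf p x * measure_pmf.expectation (q x) f)"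
proof -
  define g where "g x = measure_pmf.expectation (q x) f" for x
  have g_nonneg: "0 \<le> g x" for x
    unfolding g_def by (rule integral_nonneg_AE) (simp add: nonneg)
  have "(\<integral>\<^sup>+y. f y \<partial>bind_pmf p q) = (\<integral>\<^sup>+x. \<integral>\<^sup>+y. f y \<partial>q x \<partial>p)"
    by simp
  also have "\<dots> = (\<integral>\<^sup>+x. g x \<partial>p)"
  proof (rule nn_integral_cong_AE, rule AE_pmfI)
    fix x assume "x \<in> set_pmf p"
    then show "(\<integral>\<^sup>+y. f y \<partial>q x) = ennreal (g x)"
      using assms unfolding g_def by (intro nn_integral_eq_integral) auto
  qed
  also have "\<dots> = ennreal (measure_pmf.expectation p g)"
    using assms g_nonneg
    by (intro nn_integral_eq_integral integrable_measure_pmf_finite) (auto intro: finite_subset)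
  finally have "measure_pmf.expectation (bind_pmf p q) f = measure_pmf.expectation p g"
    using nonneg g_nonneg by (simp add: integral_eq_nn_integral integral_nonneg)
  also have "\<dots> = (\<Sum>x\<in>A. pmf p x * g x)"
    using assms by (subst integral_measure_pmf_real[of A]) (auto simp: mult.commute)
  finally show ?thesis unfolding g_def .
qed

lemma
  assumes "0 \<le> k \<Longrightarrow> summable (\<lambda>t. real t * pmf p t)"
  shows integrable_contrib: "integrable (measure_pmf p) (\<lambda>t. contrib j (k, t))"
    and expectation_contrib: "measure_pmf.expectation p (\<lambda>t. contrib j (k, t)) =
           (if 2 \<le> j then 2 else 0) + (if k = -1 then pmf p 1 else 0)
           + (if 0 \<le> k then \<Sum>t. real t * pmf p t else 0)"
proof -
  define c :: real where "c = (if 2 \<le> j then 2 else 0)"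
  define one_year :: "nat \<Rightarrow> real" where "one_year t = (if k = -1 then indicator {1} t else 0)" for t
  define years :: "nat \<Rightarrow> real" where "years t = (if 0 \<le> k then real t else 0)" for t
  have contrib: "(\<lambda>t. contrib j (k, t)) = (\<lambda>t. c + one_year t + years t)"
    by (auto simp: contrib_def c_def one_year_def years_def)
  have one_year: "integrable (measure_pmf p) one_year"
    "measure_pmf.expectation p one_year = (if k = -1 then pmf p 1 else 0)"
    unfolding one_year_def
    by (cases "k = -1"; simp add: measure_pmf_single measure_pmf.emeasure_finite less_top[symmetric])+
  have years: "integrable (measure_pmf p) years"
    "measure_pmf.expectation p years = (if 0 \<le> k then \<Sum>t. real t * pmf p t else 0)"
    unfolding years_def using assms integrable_real_pmf_nat expectation_real_pmf_nat
    by (cases "0 \<le> k"; simp)+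
  show "integrable (measure_pmf p) (\<lambda>t. contrib j (k, t))"
    unfolding contrib using one_year years by auto
  show "measure_pmf.expectation p (\<lambda>t. contrib j (k, t)) =
      (if 2 \<le> j then 2 else 0) + (if k = -1 then pmf p 1 else 0)
      + (if 0 \<le> k then \<Sum>t. real t * pmf p t else 0)"
    unfolding contrib c_def using one_year years by simp
qed

lemma expectation_contrib_joint_pmf:
  fixes K :: nat
  assumes states: "set_pmf (mu j (h j)) \<subseteq> {-1 .. int K}"
    and finite_mean: "\<And>k. 0 \<le> k \<Longrightarrow> k \<le> int K \<Longrightarrow> summable (\<lambda>t. real t * pmf (lam j k) t)"
  shows "measure_pmf.expectation (joint_pmf mu lam h j) (contrib j) =
           (if 2 \<le> j then 2 else 0) + pmf (lam j (-1)) 1 * pmf (mu j (h j)) (-1)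
           + (\<Sum>k\<in>{0 .. int K}. pmf (mu j (h j)) k * (\<Sum>t. real t * pmf (lam j k) t))"
proof -
  define M where "M = mu j (h j)"
  define c :: real where "c = (if 2 \<le> j then 2 else 0)"
  define mean where "mean k = (\<Sum>t. real t * pmf (lam j k) t)" for k
  have states_split: "{-1 .. int K} = insert (-1) {0 .. int K}"
    by auto
  have "measure_pmf.expectation (joint_pmf mu lam h j) (contrib j) =
          (\<Sum>k\<in>{-1 .. int K}. pmf M k *
             measure_pmf.expectation (map_pmf (Pair k) (lam j k)) (contrib j))"
  proof (unfold joint_pmf_def M_def, rule expectation_bind_pmf_finite_support)
    show "0 \<le> contrib j kt" for kt
      by (simp add: contrib_def)
    show "integrable (measure_pmf (map_pmf (Pair k) (lam j k))) (contrib j)"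
      if "k \<in> {-1 .. int K}" for k
      using that finite_mean by (simp add: integrable_contrib)
  qed (use states in auto)
  also have "\<dots> = (\<Sum>k\<in>{-1 .. int K}. pmf M k *
             (c + (if k = -1 then pmf (lam j k) 1 else 0) + (if 0 \<le> k then mean k else 0)))"
    unfolding c_def mean_def
    using finite_mean by (intro sum.cong refl) (simp add: expectation_contrib)
  also have "\<dots> = pmf M (-1) * (c + pmf (lam j (-1)) 1) + (\<Sum>k\<in>{0 .. int K}. pmf M k * (c + mean k))"
    unfolding states_split by (subst sum.insert) (auto intro!: sum.cong)
  also have "\<dots> = c * (\<Sum>k\<in>{-1 .. int K}. pmf M k) + pmf (lam j (-1)) 1 * pmf M (-1)
                    + (\<Sum>k\<in>{0 .. int K}. pmf M k * mean k)"
    unfolding states_split by (simp add: algebra_simps sum.distrib sum_distrib_left)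
  also have "(\<Sum>k\<in>{-1 .. int K}. pmf M k) = 1"
    using states unfolding M_def by (intro sum_pmf_eq_1) auto
  finally show ?thesis
    unfolding M_def c_def mean_def by simp
qed

theorem proposition1:
  fixes J K :: nat and N0 :: real and h :: policy
    and mu :: "nat \<Rightarrow> scr \<Rightarrow> int pmf" and lam :: "nat \<Rightarrow> int \<Rightarrow> nat pmf"
  assumes states: "\<And>j a. set_pmf (mu j a) \<subseteq> {-1 .. int K}"
    and finite_mean: "\<And>j k. 0 \<le> k \<Longrightarrow> k \<le> int K \<Longrightarrow>
                          summable (\<lambda>t. real t * pmf (lam j k) t)"
  shows "expected_life_years J N0 mu lam h =
           (\<Sum>j = 2..J. 2 * cohort N0 mu lam h j)
           + (\<Sum>j = 1..J. (pmf (lam j (-1)) 1 * pmf (mu j (h j)) (-1)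
                 + (\<Sum>k\<in>{0 .. int K}. pmf (mu j (h j)) k * (\<Sum>t. real t * pmf (lam j k) t)))
                 * cohort N0 mu lam h j)"
proof -
  define N where "N j = cohort N0 mu lam h j" for j
  define A where "A j = pmf (lam j (-1)) 1 * pmf (mu j (h j)) (-1)
                 + (\<Sum>k\<in>{0 .. int K}. pmf (mu j (h j)) k * (\<Sum>t. real t * pmf (lam j k) t))" for j
  have "expected_life_years J N0 mu lam h =
          (\<Sum>j = 1..J. (if 2 \<le> j then 2 * N j else 0) + A j * N j)"
    unfolding expected_life_years_def N_def A_def
    by (intro sum.cong refl)
       (simp add: expectation_contrib_joint_pmf[OF states finite_mean] algebra_simps)
  also have "\<dots> = (\<Sum>j = 1..J. if 2 \<le> j then 2 * N j else 0) + (\<Sum>j = 1..J. A j * N j)"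
    by (rule sum.distrib)
  also have "(\<Sum>j = 1..J. if 2 \<le> j then 2 * N j else 0) = (\<Sum>j = 2..J. 2 * N j)"
    by (rule sum.mono_neutral_cong_right) auto
  finally show ?thesis
    unfolding N_def A_def .
qed

end
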